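(* For an entire function $G$, the condition $\limsup_{|z|\to\infty}\operatorname{Re}(\overline{z}G(z))\le 0$ holds if and only if $G(z)=az+b$ with either (i) $a\in\mathbb{C}_-$ and $b\in\mathbb{C}$, or (ii) $a\in i\mathbb{R}$ and $b=0$.
   Context: $\mathbb{C}_-:=\{z\in\mathbb{C}:\operatorname{Re}z<0\}$. *)

theory Defs
  imports "HOL-Complex_Analysis.Complex_Analysis" "HOL-Library.Liminf_Limsup"
begin

definition cminus :: "complex set" where
  "cminus = {z. Re z < 0}"

definition imag_axis :: "complex set" where
  "imag_axis = (\<lambda>t::real. \<i> * complex_of_real t) ` UNIV"

end

theory Submission
  imports Defs
begin

text \<open>Write \<open>G z = G 0 + z h(z)\<close> with \<open>h\<close> entire. Then
  \<open>Re (cnj z G z) = |z|\<^sup>2 Re h(z) + Re (cnj z G 0)\<close>, so an upper bound on the left-hand side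
  for large \<open>|z|\<close> bounds \<open>Re h\<close> from above, and Liouville's theorem applied to
  \<open>1 / (h - c)\<close> makes \<open>h\<close> constant: \<open>G z = a z + b\<close>. For such \<open>G\<close> the quantity is
  \<open>Re a |z|\<^sup>2 + Re (cnj z b)\<close>, which stays bounded above at infinity exactly when
  \<open>Re a < 0\<close>, or \<open>Re a = 0\<close> and \<open>b = 0\<close>; in these cases it is even eventually \<open>\<le> 0\<close>.\<close>

lemma imag_axis_iff_Re_eq_0: "a \<in> imag_axis \<longleftrightarrow> Re a = 0"
  by (auto simp: imag_axis_def complex_eq_iff intro: image_eqI[of _ _ "Im a"])

lemma Re_cnj_mult_affine:
  "Re (cnj z * (a * z + b)) = Re a * (cmod z)\<^sup>2 + Re (cnj z * b)"
proof -
  have "cnj z * (a * z + b) = a * (z * cnj z) + cnj z * b"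
    by (simp add: algebra_simps)
  then show ?thesis
    by (simp add: complex_norm_square[symmetric])
qed

lemma continuous_bounded_above_if_eventually_at_infinity:
  fixes f :: "'a::{heine_borel, real_normed_vector} \<Rightarrow> real"
  assumes "continuous_on UNIV f" and "eventually (\<lambda>z. f z \<le> M) at_infinity"
  shows "\<exists>B. \<forall>z. f z \<le> B"
proof -
  obtain R where R: "\<And>z. R \<le> norm z \<Longrightarrow> f z \<le> M"
    using assms(2) by (auto simp: eventually_at_infinity)
  have "compact (f ` cball 0 R)"
    using assms(1) by (intro compact_continuous_image) (auto intro: continuous_on_subset)
  then obtain B where B: "\<And>z. z \<in> cball 0 R \<Longrightarrow> \<bar>f z\<bar> \<le> B"
    by (metis compact_imp_bounded bounded_iff image_eqI real_norm_def)
  have "f z \<le> max B M" for z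
    using R[of z] B[of z] by (cases "norm z \<le> R") auto
  then show ?thesis
    by blast
qed

lemma entire_constant_if_Re_bounded_above:
  assumes holf: "f holomorphic_on UNIV" and bound: "\<And>z. Re (f z) \<le> M"
  shows "f constant_on UNIV"
proof -
  define c where "c = complex_of_real (M + 1)"
  have far: "1 \<le> cmod (f z - c)" for z
    using bound[of z] abs_Re_le_cmod[of "f z - c"] by (simp add: c_def)
  then have nz: "f z - c \<noteq> 0" for z
    by (metis norm_zero not_one_le_zero)
  define g where "g z = 1 / (f z - c)" for z
  have "g holomorphic_on UNIV"
    unfolding g_def using nz by (intro holomorphic_intros holf) auto
  moreover have "bounded (range g)"
    unfolding bounded_iff
    by (intro exI[of _ 1]) (use far in \<open>auto simp: g_def norm_divide divide_le_eq\<close>)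
  ultimately have "g constant_on UNIV"
    by (rule Liouville_theorem)
  then obtain k where "\<And>z. g z = k"
    by (auto simp: constant_on_def)
  moreover have "f z = c + 1 / g z" for z
    by (simp add: g_def)
  ultimately show ?thesis
    by (auto simp: constant_on_def)
qed

lemma entire_affine_if_Re_cnj_eventually_bounded_above:
  fixes G :: "complex \<Rightarrow> complex"
  assumes holG: "G holomorphic_on UNIV"
    and bound: "eventually (\<lambda>z. Re (cnj z * G z) \<le> C) at_infinity"
  shows "\<exists>a b. \<forall>z. G z = a * z + b"
proof -
  define h where "h z = (if z = 0 then deriv G 0 else (G z - G 0) / (z - 0))" for z
  have holh: "h holomorphic_on UNIV"
    unfolding h_def[abs_def] by (rule pole_lemma[OF holG]) simp
  have G_eq: "G z = h z * z + G 0" for z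
    by (cases "z = 0") (auto simp: h_def)
  have "eventually (\<lambda>z. 1 \<le> cmod z) at_infinity"
    by (auto simp: eventually_at_infinity)
  with bound have "eventually (\<lambda>z. Re (h z) \<le> \<bar>C\<bar> + cmod (G 0)) at_infinity"
  proof eventually_elim
    case (elim z)
    have z1: "1 \<le> cmod z"
      using elim(2) by simp
    have "(cmod z)\<^sup>2 * Re (h z) = Re (cnj z * G z) - Re (cnj z * G 0)"
      using Re_cnj_mult_affine[of z "h z" "G 0"] by (simp add: G_eq[of z])
    also have "\<dots> \<le> \<bar>C\<bar> + cmod z * cmod (G 0)"
      using elim(1) abs_Re_le_cmod[of "cnj z * G 0"] by (simp add: norm_mult)
    also have "\<dots> \<le> (cmod z)\<^sup>2 * (\<bar>C\<bar> + cmod (G 0))"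
    proof -
      have "1 \<le> (cmod z)\<^sup>2" "cmod z \<le> (cmod z)\<^sup>2"
        using z1 mult_right_mono[of 1 "cmod z" "cmod z"] by (auto simp: power2_eq_square)
      then have "\<bar>C\<bar> \<le> (cmod z)\<^sup>2 * \<bar>C\<bar>" "cmod z * cmod (G 0) \<le> (cmod z)\<^sup>2 * cmod (G 0)"
        by (simp_all add: mult_right_mono mult_le_cancel_right1)
      then show ?thesis
        by (simp add: distrib_left)
    qed
    finally show ?case
      using z1 by (auto simp: mult_le_cancel_left)
  qed
  then obtain M where "\<And>z. Re (h z) \<le> M"
    using continuous_bounded_above_if_eventually_at_infinity[of "\<lambda>z. Re (h z)"] holh
    by (metis continuous_on_Re holomorphic_on_imp_continuous_on)
  then have "h constant_on UNIV"
    by (rule entire_constant_if_Re_bounded_above[OF holh])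
  then obtain a where "\<And>z. h z = a"
    by (auto simp: constant_on_def)
  then show ?thesis
    using G_eq by (metis mult.commute)
qed

lemma affine_Re_cnj_not_eventually_bounded_above:
  assumes "Re a \<ge> 0" and "Re a = 0 \<Longrightarrow> b \<noteq> 0"
  shows "\<not> eventually (\<lambda>z. Re (cnj z * (a * z + b)) \<le> C) at_infinity"
proof
  assume bounded: "eventually (\<lambda>z. Re (cnj z * (a * z + b)) \<le> C) at_infinity"
  \<comment> \<open>Along the ray through \<open>u\<close> the quantity grows at least like \<open>c t\<close>: for \<open>b \<noteq> 0\<close> the
    linear term \<open>t |b|\<^sup>2\<close> does it, for \<open>b = 0\<close> the quadratic term \<open>Re a t\<^sup>2\<close>.\<close>
  define u where "u = (if b = 0 then 1 else b)"
  define c where "c = Re a * (cmod u)\<^sup>2 + Re (cnj u * b)"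
  have "u \<noteq> 0"
    by (simp add: u_def)
  have "c > 0"
  proof (cases "b = 0")
    case True
    then show ?thesis
      using assms by (cases "Re a = 0") (auto simp: c_def u_def)
  next
    case False
    then have "Re (cnj u * b) > 0"
      by (simp add: u_def mult.commute[of "cnj b" b] complex_norm_square[symmetric])
    then show ?thesis
      using assms(1) by (simp add: c_def add_nonneg_pos)
  qed
  have "filterlim (\<lambda>t. u * of_real t) at_infinity at_top"
    using \<open>u \<noteq> 0\<close> by (intro tendsto_mult_filterlim_at_infinity filterlim_of_real_at_infinity) auto
  then have "eventually (\<lambda>t. Re (cnj (u * of_real t) * (a * (u * of_real t) + b)) \<le> C) at_top"
    by (rule eventually_compose_filterlim[OF bounded])
  then have "eventually (\<lambda>t. t * c \<le> C) at_top"
    using eventually_ge_at_top[of 1]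
  proof eventually_elim
    case (elim t)
    have "Re a * (cmod u)\<^sup>2 \<le> t * (Re a * (cmod u)\<^sup>2)"
      using mult_right_mono[of 1 t "Re a * (cmod u)\<^sup>2"] elim(2) assms(1) by simp
    then have "t * (Re a * (cmod u)\<^sup>2) \<le> t\<^sup>2 * Re a * (cmod u)\<^sup>2"
      using mult_left_mono[of _ _ t] elim(2) by (simp add: power2_eq_square mult.assoc)
    then have "t * c \<le> t\<^sup>2 * Re a * (cmod u)\<^sup>2 + t * Re (cnj u * b)"
      unfolding c_def by (simp add: distrib_left)
    also have "\<dots> = Re (cnj (u * of_real t) * (a * (u * of_real t) + b))"
      unfolding Re_cnj_mult_affine by (simp add: norm_mult power_mult_distrib algebra_simps)
    also have "\<dots> \<le> C"
      by (rule elim(1))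
    finally show ?case .
  qed
  moreover have "eventually (\<lambda>t. t * c > C) at_top"
    using eventually_gt_at_top[of "C / c"]
    by (rule eventually_mono) (use \<open>c > 0\<close> in \<open>simp add: pos_divide_less_eq\<close>)
  ultimately have "eventually (\<lambda>_. False) (at_top :: real filter)"
    by eventually_elim simp
  then show False
    by simp
qed

lemma affine_Re_cnj_eventually_nonpos:
  assumes "Re a < 0 \<or> (Re a = 0 \<and> b = 0)"
  shows "eventually (\<lambda>z. Re (cnj z * (a * z + b)) \<le> 0) at_infinity"
  using assms
proof
  assume neg: "Re a < 0"
  show ?thesis
    unfolding eventually_at_infinity
  proof (intro exI allI impI)
    fix z :: complex
    assume "cmod b / - Re a \<le> cmod z"
    then have "cmod b \<le> - Re a * cmod z"
      using neg pos_divide_le_eq[of "- Re a"] by (simp add: mult.commute)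
    then have "cmod z * cmod b \<le> cmod z * (- Re a * cmod z)"
      by (intro mult_left_mono) auto
    moreover have "Re a * (cmod z)\<^sup>2 = - (cmod z * (- Re a * cmod z))"
      by (simp add: power2_eq_square algebra_simps)
    moreover have "Re (cnj z * b) \<le> cmod z * cmod b"
      using complex_Re_le_cmod[of "cnj z * b"] by (simp add: norm_mult)
    ultimately show "Re (cnj z * (a * z + b)) \<le> 0"
      unfolding Re_cnj_mult_affine by linarith
  qed
qed (simp add: Re_cnj_mult_affine)

theorem proposition2p5:
  fixes G :: "complex \<Rightarrow> complex"
  assumes "G holomorphic_on UNIV"
  shows "Limsup at_infinity (\<lambda>z. ereal (Re (cnj z * G z))) \<le> 0 \<longleftrightarrow>
         (\<exists>a b. (\<forall>z. G z = a * z + b) \<and>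
                ((a \<in> cminus) \<or> (a \<in> imag_axis \<and> b = 0)))"
proof
  assume "Limsup at_infinity (\<lambda>z. ereal (Re (cnj z * G z))) \<le> 0"
  then have "eventually (\<lambda>z. ereal (Re (cnj z * G z)) < 1) at_infinity"
    by (intro Limsup_lessD) (simp add: le_less_trans)
  then have bounded: "eventually (\<lambda>z. Re (cnj z * G z) \<le> 1) at_infinity"
    by eventually_elim simp
  then obtain a b where G: "\<And>z. G z = a * z + b"
    using entire_affine_if_Re_cnj_eventually_bounded_above[OF assms] by blast
  have "Re a < 0 \<or> (Re a = 0 \<and> b = 0)"
    using affine_Re_cnj_not_eventually_bounded_above[of a b 1] bounded by (force simp: G)
  then show "\<exists>a b. (\<forall>z. G z = a * z + b) \<and> ((a \<in> cminus) \<or> (a \<in> imag_axis \<and> b = 0))"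
    using G by (auto simp: cminus_def imag_axis_iff_Re_eq_0)
next
  assume "\<exists>a b. (\<forall>z. G z = a * z + b) \<and> ((a \<in> cminus) \<or> (a \<in> imag_axis \<and> b = 0))"
  then obtain a b where "\<And>z. G z = a * z + b" and "Re a < 0 \<or> (Re a = 0 \<and> b = 0)"
    by (auto simp: cminus_def imag_axis_iff_Re_eq_0)
  then have "eventually (\<lambda>z. ereal (Re (cnj z * G z)) \<le> 0) at_infinity"
    using affine_Re_cnj_eventually_nonpos[of a b] by simp
  then show "Limsup at_infinity (\<lambda>z. ereal (Re (cnj z * G z))) \<le> 0"
    by (rule Limsup_bounded)
qed

end
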